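(* There exist absolute constants $c_1,c_2>0$ such that for every $M\in\{0,1\}^{m\times n}$, $$c_1\operatorname{disc}^{+}(M)\leq \operatorname{pdisc}(M)\leq c_2\operatorname{disc}^{+}(M)\quad\text{and}\quad c_1\operatorname{disc}^{-}(M)\leq \operatorname{pdisc}(M)\leq c_2\operatorname{disc}^{-}(M).$$
   Context: For $M\in\{0,1\}^{m\times n}$, $|M|$ is the number of $1$ entries, $p=|M|/(mn)$, and for $X\subset[m]$, $Y\subset[n]$, $\operatorname{disc}(X,Y)=|M[X\times Y]|-p|X||Y|$, where $|M[X\times Y]|$ is the number of $1$ entries of the submatrix with rows $X$ and columns $Y$; $\operatorname{disc}^{+}(M)=\max_{X,Y}\operatorname{disc}(X,Y)$ and $\operatorname{disc}^{-}(M)=\max_{X,Y}(-\operatorname{disc}(X,Y))$. Let $N=m+n$. The symmetrization of $M$ is the symmetric matrix $A\in\mathbb{R}^{N\times N}$ with $A_{i,j+m}=A_{j+m,i}=M_{i,j}$ for $(i,j)\in[m]\times[n]$ and all other entries $0$. Let $L\in\mathbb{R}^{N\times N}$ be the adjacency matrix of the complete bipartite graph with parts $[m]$ and $[m+1,N]$ ($L_{i,j}=1$ if exactly one of $i,j$ lies in $[m]$, else $0$). For $X\in\mathbb{R}^{N\times N}$, $\operatorname{disc}(X)=\langle X,A\rangle-p\langle X,L\rangle$, where $\langle\cdot,\cdot\rangle$ is the entrywise (Frobenius) inner product, and $\operatorname{pdisc}(M)=\max\{\operatorname{disc}(X): X \text{ symmetric positive semidefinite},\ X_{i,i}\leq 1\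 \forall i\in[N]\}$. *)

theory Defs
  imports Complex_Main
begin

text \<open>Matrices are functions nat => nat => real, indexed from 0; only the entries
inside the stated index range matter.\<close>

definition density :: "nat \<Rightarrow> nat \<Rightarrow> (nat \<Rightarrow> nat \<Rightarrow> real) \<Rightarrow> real" where
  "density m n M = (\<Sum>i<m. \<Sum>j<n. M i j) / (real m * real n)"

definition disc_rect :: "nat \<Rightarrow> nat \<Rightarrow> (nat \<Rightarrow> nat \<Rightarrow> real) \<Rightarrow> nat set \<Rightarrow> nat set \<Rightarrow> real" where
  "disc_rect m n M X Y =
     (\<Sum>i\<in>X. \<Sum>j\<in>Y. M i j) - density m n M * real (card X) * real (card Y)"

definition disc_plus :: "nat \<Rightarrow> nat \<Rightarrow> (nat \<Rightarrow> nat \<Rightarrow> real) \<Rightarrow> real" where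
  "disc_plus m n M = Max {disc_rect m n M X Y | X Y. X \<subseteq> {..<m} \<and> Y \<subseteq> {..<n}}"

definition disc_minus :: "nat \<Rightarrow> nat \<Rightarrow> (nat \<Rightarrow> nat \<Rightarrow> real) \<Rightarrow> real" where
  "disc_minus m n M = Max {- disc_rect m n M X Y | X Y. X \<subseteq> {..<m} \<and> Y \<subseteq> {..<n}}"

definition symmetrization :: "nat \<Rightarrow> nat \<Rightarrow> (nat \<Rightarrow> nat \<Rightarrow> real) \<Rightarrow> nat \<Rightarrow> nat \<Rightarrow> real" where
  "symmetrization m n M i j =
     (if i < m \<and> m \<le> j \<and> j < m + n then M i (j - m)
      else if j < m \<and> m \<le> i \<and> i < m + n then M j (i - m) else 0)"

text \<open>Adjacency matrix of the complete bipartite graph with parts [m] and [m+1,N].\<close>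
definition bip_L :: "nat \<Rightarrow> nat \<Rightarrow> nat \<Rightarrow> nat \<Rightarrow> real" where
  "bip_L m n i j = (if i < m + n \<and> j < m + n \<and> ((i < m) \<noteq> (j < m)) then 1 else 0)"

definition frob :: "nat \<Rightarrow> (nat \<Rightarrow> nat \<Rightarrow> real) \<Rightarrow> (nat \<Rightarrow> nat \<Rightarrow> real) \<Rightarrow> real" where
  "frob N X A = (\<Sum>i<N. \<Sum>j<N. X i j * A i j)"

definition sym_psd :: "nat \<Rightarrow> (nat \<Rightarrow> nat \<Rightarrow> real) \<Rightarrow> bool" where
  "sym_psd N X \<longleftrightarrow> (\<forall>i<N. \<forall>j<N. X i j = X j i) \<and>
     (\<forall>v :: nat \<Rightarrow> real. 0 \<le> (\<Sum>i<N. \<Sum>j<N. v i * X i j * v j))"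

definition disc_mat :: "nat \<Rightarrow> nat \<Rightarrow> (nat \<Rightarrow> nat \<Rightarrow> real) \<Rightarrow> (nat \<Rightarrow> nat \<Rightarrow> real) \<Rightarrow> real" where
  "disc_mat m n M X =
     frob (m + n) X (symmetrization m n M) - density m n M * frob (m + n) X (bip_L m n)"

text \<open>The maximum is attained (compact feasible set); we write it as Sup.\<close>
definition pdisc :: "nat \<Rightarrow> nat \<Rightarrow> (nat \<Rightarrow> nat \<Rightarrow> real) \<Rightarrow> real" where
  "pdisc m n M = Sup {disc_mat m n M X | X. sym_psd (m + n) X \<and> (\<forall>i<m + n. X i i \<le> 1)}"

end

theory Submission
  imports Defs
begin

text \<open>
  For symmetric X, disc_mat X is twice the bilinear form of the centred matrix B = M - p
  evaluated on the off-diagonal block of X, so pdisc is twice the value of the semidefinite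
  relaxation of max x^T B y over x, y in [-1, 1]. Rank-one feasible points built from
  indicator vectors show that disc^+ and disc^- are at most this value.

  Conversely, a Gram factorisation writes a feasible X as the covariance E[z z^T] of
  Rademacher sums z with E[z^2] \<le> 1, and Khintchine's inequality gives E[z^4] \<le> 3.
  Truncating z at 8 leaves a remainder of second moment at most 3/64. The truncated part
  is a bilinear form in vectors bounded by 8, hence at most 64 (2 disc^+ + 2 disc^-), while
  the two cross terms involving the remainder are again feasible points of the relaxation,
  scaled by 1/4. So the SDP value is at most 128 (2 disc^+ + 2 disc^-). Finally, disc^+ and
  disc^- are within a factor 3 of each other, because the entries of B sum to zero.
\<close>

section \<open>Averages over random signs\<close>

text \<open>sign_mean d f is the expectation of f r for independent uniform signs r 0, ..., r (d - 1)
  and r k = 0 for k \<ge> d.\<close>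
fun sign_mean :: "nat \<Rightarrow> ((nat \<Rightarrow> real) \<Rightarrow> real) \<Rightarrow> real" where
  "sign_mean 0 f = f (\<lambda>_. 0)"
| "sign_mean (Suc d) f = sign_mean d (\<lambda>r. (f (r(d := 1)) + f (r(d := -1))) / 2)"

lemma sign_mean_add: "sign_mean d (\<lambda>r. f r + g r) = sign_mean d f + sign_mean d g"
  by (induction d arbitrary: f g) (simp_all add: add_divide_distrib algebra_simps)

lemma sign_mean_cmult: "sign_mean d (\<lambda>r. c * f r) = c * sign_mean d f"
proof (induction d arbitrary: f)
  case (Suc d)
  have "(\<lambda>r. (c * f (r(d := 1)) + c * f (r(d := -1))) / 2)
      = (\<lambda>r. c * ((f (r(d := 1)) + f (r(d := -1))) / 2))"
    by (simp add: algebra_simps)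
  then show ?case
    by (simp only: sign_mean.simps Suc.IH)
qed simp

lemma sign_mean_const: "sign_mean d (\<lambda>_. c) = c"
  by (induction d arbitrary: c) simp_all

lemma sign_mean_mono: "(\<And>r. f r \<le> g r) \<Longrightarrow> sign_mean d f \<le> sign_mean d g"
  by (induction d arbitrary: f g) (simp_all add: add_mono divide_right_mono)

lemma sign_mean_nonneg: "(\<And>r. 0 \<le> f r) \<Longrightarrow> 0 \<le> sign_mean d f"
  using sign_mean_mono[of "\<lambda>_. 0" f d] by (simp add: sign_mean_const)

lemma sign_mean_sum: "sign_mean d (\<lambda>r. \<Sum>k\<in>A. f k r) = (\<Sum>k\<in>A. sign_mean d (f k))"
  by (induction A rule: infinite_finite_induct) (simp_all add: sign_mean_const sign_mean_add)

definition rademacher_sum :: "nat \<Rightarrow> (nat \<Rightarrow> real) \<Rightarrow> (nat \<Rightarrow> real) \<Rightarrow> real" where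
  "rademacher_sum d c r = (\<Sum>k<d. r k * c k)"

lemma rademacher_sum_upd: "rademacher_sum (Suc d) c (r(d := s)) = rademacher_sum d c r + s * c d"
  unfolding rademacher_sum_def by (auto intro!: sum.cong)

lemma sign_mean_rademacher_sum_mult:
  "sign_mean d (\<lambda>r. rademacher_sum d c r * rademacher_sum d c' r) = (\<Sum>k<d. c k * c' k)"
  by (induction d) (simp_all add: rademacher_sum_def[of 0] rademacher_sum_upd sign_mean_add
      sign_mean_const algebra_simps add_divide_distrib)

lemma sign_mean_rademacher_sum_pow4:
  "sign_mean d (\<lambda>r. (rademacher_sum d c r)^4) \<le> 3 * (\<Sum>k<d. (c k)^2)^2"
proof (induction d)
  case 0
  then show ?case by (simp add: rademacher_sum_def)
next
  case (Suc d)
  define Q where "Q = (\<Sum>k<d. (c k)^2)"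
  have second: "sign_mean d (\<lambda>r. (rademacher_sum d c r)^2) = Q"
    using sign_mean_rademacher_sum_mult[of d c c] by (simp add: Q_def power2_eq_square)
  have even_part: "((x + 1 * y)^4 + (x + - 1 * y)^4) / 2 = x^4 + (6 * y^2) * x^2 + y^4" for x y :: real
    by (simp add: power_def algebra_simps add_divide_distrib)
  have "sign_mean (Suc d) (\<lambda>r. (rademacher_sum (Suc d) c r)^4)
      = sign_mean d (\<lambda>r. (rademacher_sum d c r)^4) + 6 * (c d)^2 * Q + (c d)^4"
    by (simp only: sign_mean.simps rademacher_sum_upd even_part sign_mean_add sign_mean_cmult
        sign_mean_const second)
  also have "\<dots> \<le> 3 * Q^2 + 6 * (c d)^2 * Q + 3 * (c d)^4"
  proof -
    have "0 \<le> (c d)^4"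
      by simp
    then show ?thesis
      using Suc.IH unfolding Q_def by linarith
  qed
  also have "\<dots> = 3 * (Q + (c d)^2)^2"
    by algebra
  finally show ?case
    by (simp add: Q_def)
qed

section \<open>Positive semidefinite matrices\<close>

definition quad_form :: "nat \<Rightarrow> (nat \<Rightarrow> nat \<Rightarrow> real) \<Rightarrow> (nat \<Rightarrow> real) \<Rightarrow> real" where
  "quad_form N X v = (\<Sum>i<N. \<Sum>j<N. v i * X i j * v j)"

lemma sym_psd_iff:
  "sym_psd N X \<longleftrightarrow> (\<forall>i<N. \<forall>j<N. X i j = X j i) \<and> (\<forall>v. 0 \<le> quad_form N X v)"
  unfolding sym_psd_def quad_form_def by simp

lemma quad_form_Suc:
  "quad_form (Suc N) X v
     = quad_form N X v + v N * (\<Sum>i<N. (X i N + X N i) * v i) + v N * X N N * v N"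
  unfolding quad_form_def by (simp add: sum.distrib sum_distrib_left algebra_simps)

lemma quad_form_cong: "(\<And>i. i < N \<Longrightarrow> u i = v i) \<Longrightarrow> quad_form N X u = quad_form N X v"
  unfolding quad_form_def by (intro sum.cong refl) auto

lemma quad_form_minus_outer:
  "quad_form N (\<lambda>i j. X i j - c i * d j) v
     = quad_form N X v - (\<Sum>i<N. c i * v i) * (\<Sum>j<N. d j * v j)"
  unfolding quad_form_def sum_product by (simp add: sum_subtractf algebra_simps)

lemma quad_form_outer: "quad_form N (\<lambda>i j. u i * u j) v = (\<Sum>i<N. u i * v i)^2"
  unfolding quad_form_def power2_eq_square sum_product by (simp add: algebra_simps)

lemma sym_psd_outer: "sym_psd N (\<lambda>i j. u i * u j)"
  unfolding sym_psd_iff quad_form_outer by simp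

lemma quad_form_cmult: "quad_form N (\<lambda>i j. c * X i j) v = c * quad_form N X v"
  unfolding quad_form_def by (simp add: sum_distrib_left algebra_simps)

lemma sym_psd_cmult: "0 \<le> c \<Longrightarrow> sym_psd N X \<Longrightarrow> sym_psd N (\<lambda>i j. c * X i j)"
  unfolding sym_psd_iff quad_form_cmult by simp

lemma sym_psd_sign_mean:
  assumes "\<And>r. sym_psd N (X r)"
  shows "sym_psd N (\<lambda>i j. sign_mean d (\<lambda>r. X r i j))"
  unfolding sym_psd_iff
proof (intro conjI allI impI)
  fix i j assume "i < N" "j < N"
  then show "sign_mean d (\<lambda>r. X r i j) = sign_mean d (\<lambda>r. X r j i)"
    using assms unfolding sym_psd_iff by simp
next
  fix v
  have "quad_form N (\<lambda>i j. sign_mean d (\<lambda>r. X r i j)) v = sign_mean d (\<lambda>r. quad_form N (X r) v)"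
    unfolding quad_form_def by (simp add: sign_mean_sum sign_mean_cmult mult.commute mult.left_commute)
  also have "0 \<le> \<dots>"
    using assms unfolding sym_psd_iff by (simp add: sign_mean_nonneg)
  finally show "0 \<le> quad_form N (\<lambda>i j. sign_mean d (\<lambda>r. X r i j)) v" .
qed

lemma sym_psd_pair:
  assumes "sym_psd N X" "i < N" "j < N"
  shows "0 \<le> a^2 * X i i + 2 * a * b * X i j + b^2 * X j j"
proof -
  define v where "v k = (if k = i then a else 0) + (if k = j then b else 0)" for k
  have v: "(\<Sum>k<N. v k * g k) = a * g i + b * g j" for g
    unfolding v_def using assms(2,3)
    by (simp add: distrib_right sum.distrib if_distrib[of "\<lambda>x. x * g _"] cong: if_cong)
  have "quad_form N X v = (\<Sum>k<N. v k * (\<Sum>l<N. v l * X k l))"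
    unfolding quad_form_def by (simp add: sum_distrib_left algebra_simps)
  also have "\<dots> = a * (a * X i i + b * X i j) + b * (a * X j i + b * X j j)"
    by (simp only: v)
  also have "\<dots> = a^2 * X i i + 2 * a * b * X i j + b^2 * X j j"
    using assms unfolding sym_psd_iff by (simp add: power2_eq_square algebra_simps)
  finally show ?thesis
    using assms(1) unfolding sym_psd_iff by metis
qed

lemma sym_psd_diag_nonneg: "sym_psd N X \<Longrightarrow> i < N \<Longrightarrow> 0 \<le> X i i"
  using sym_psd_pair[of N X i i 1 0] by simp

lemma sym_psd_abs_le: "sym_psd N X \<Longrightarrow> i < N \<Longrightarrow> j < N \<Longrightarrow> 2 * \<bar>X i j\<bar> \<le> X i i + X j j"
  using sym_psd_pair[of N X i j 1 1] sym_psd_pair[of N X i j 1 "-1"] by (simp add: abs_le_iff)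

lemma sym_psd_zero_diag:
  assumes "sym_psd N X" "i < N" "j < N" "X j j = 0"
  shows "X i j = 0"
proof (rule ccontr)
  assume nz: "X i j \<noteq> 0"
  define b where "b = - (X i i + 1) / (2 * X i j)"
  have "0 \<le> 1^2 * X i i + 2 * 1 * b * X i j + b^2 * X j j"
    using sym_psd_pair[OF assms(1-3)] .
  also have "\<dots> = -1"
    using nz assms(4) by (simp add: b_def field_simps)
  finally show False
    by simp
qed

lemma sym_psd_schur_complement:
  assumes psd: "sym_psd (Suc N) X"
  shows "sym_psd N (\<lambda>i j. X i j - X i N * X N j / X N N)"
proof -
  define a where "a = X N N"
  have sym: "X i j = X j i" if "i < Suc N" "j < Suc N" for i j
    using psd that unfolding sym_psd_iff by blast
  show ?thesis
    unfolding sym_psd_iff a_def[symmetric]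
  proof (intro conjI allI impI)
    fix i j assume "i < N" "j < N"
    then show "X i j - X i N * X N j / a = X j i - X j N * X N i / a"
      using sym[of i j] sym[of i N] sym[of j N] by simp
  next
    fix v
    define s where "s = (\<Sum>i<N. X N i * v i)"
    have column: "(\<Sum>i<N. X i N * v i) = s"
      unfolding s_def by (intro sum.cong) (auto simp: sym)
    have s_zero: "s = 0" if "a = 0"
      unfolding s_def using sym_psd_zero_diag[OF psd, of _ N] sym that a_def
      by (intro sum.neutral) auto
    have "quad_form N (\<lambda>i j. X i j - X i N * X N j / a) v
        = quad_form N (\<lambda>i j. X i j - X i N / a * X N j) v"
      by simp
    also have "\<dots> = quad_form N X v - s^2 / a"
    proof -
      have "(\<Sum>i<N. X i N / a * v i) = s / a"
        unfolding column[symmetric] by (simp add: sum_divide_distrib)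
      then show ?thesis
        unfolding quad_form_minus_outer s_def[symmetric] by (simp add: power2_eq_square)
    qed
    also have "\<dots> = quad_form (Suc N) X (v(N := - s / a))"
    proof -
      have "(\<Sum>i<N. (X i N + X N i) * v i) = 2 * s"
        using column by (simp add: s_def distrib_right sum.distrib)
      moreover have "quad_form N X (v(N := - s / a)) = quad_form N X v"
        by (rule quad_form_cong) simp
      moreover have "s^2 / a = 2 * s * s / a - s / a * a * (s / a)"
        using s_zero by (cases "a = 0") (simp_all add: field_simps power2_eq_square)
      ultimately show ?thesis
        unfolding quad_form_Suc a_def[symmetric]
        by (simp add: quad_form_cong[of N "v(N := - s / a)" v] algebra_simps)
    qed
    also have "0 \<le> \<dots>"
      using psd unfolding sym_psd_iff by blast
    finally show "0 \<le> quad_form N (\<lambda>i j. X i j - X i N * X N j / a) v" .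
  qed
qed

lemma sym_psd_gram: "sym_psd N X \<Longrightarrow> \<exists>w. \<forall>i<N. \<forall>j<N. X i j = (\<Sum>k<N. w k i * w k j)"
proof (induction N arbitrary: X)
  case (Suc N)
  define a where "a = X N N"
  define c where "c i = X i N / sqrt a" for i
  have sym: "X i j = X j i" if "i < Suc N" "j < Suc N" for i j
    using Suc.prems that unfolding sym_psd_iff by blast
  have "0 \<le> a"
    unfolding a_def using sym_psd_diag_nonneg[OF Suc.prems] by simp
  then have c_mult: "c i * c j = X i N * X N j / a" if "j < Suc N" for i j
    using sym[OF that, of N] by (simp add: c_def)
  have c_edge: "X i j = c i * c j" if "i < Suc N" "j < Suc N" "i = N \<or> j = N" for i j
  proof (cases "a = 0")
    case True
    have "X k N = 0" if "k < Suc N" for k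
      using sym_psd_zero_diag[OF Suc.prems that] True a_def by simp
    then show ?thesis
      using that sym[of N j] True by (auto simp: c_def)
  next
    case False
    then show ?thesis
      using that c_mult a_def by auto
  qed
  obtain w where w: "\<And>i j. i < N \<Longrightarrow> j < N \<Longrightarrow> X i j - c i * c j = (\<Sum>k<N. w k i * w k j)"
    using Suc.IH[OF sym_psd_schur_complement[OF Suc.prems]] c_mult a_def by fastforce
  define w' where "w' k i = (if k = N then c i else if i = N then 0 else w k i)" for k i
  show ?case
  proof (intro exI allI impI)
    fix i j assume ij: "i < Suc N" "j < Suc N"
    have "(\<Sum>k<Suc N. w' k i * w' k j)
        = (if i = N \<or> j = N then 0 else \<Sum>k<N. w k i * w k j) + c i * c j"
      unfolding w'_def by (auto intro: sum.cong)
    then show "X i j = (\<Sum>k<Suc N. w' k i * w' k j)"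
      using ij w[of i j] c_edge[OF ij] by (cases "i = N \<or> j = N") auto
  qed
qed simp

section \<open>The semidefinite relaxation\<close>

definition sdp_feasible :: "nat \<Rightarrow> (nat \<Rightarrow> nat \<Rightarrow> real) set" where
  "sdp_feasible N = {X. sym_psd N X \<and> (\<forall>i<N. X i i \<le> 1)}"

definition sdp_obj :: "nat \<Rightarrow> nat \<Rightarrow> (nat \<Rightarrow> nat \<Rightarrow> real) \<Rightarrow> (nat \<Rightarrow> nat \<Rightarrow> real) \<Rightarrow> real" where
  "sdp_obj m n B X = (\<Sum>i<m. \<Sum>j<n. B i j * X i (m + j))"

definition sdp_value :: "nat \<Rightarrow> nat \<Rightarrow> (nat \<Rightarrow> nat \<Rightarrow> real) \<Rightarrow> real" where
  "sdp_value m n B = Sup (sdp_obj m n B ` sdp_feasible (m + n))"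

lemma sdp_obj_cong:
  "(\<And>i j. i < m \<Longrightarrow> j < n \<Longrightarrow> X i (m + j) = Y i (m + j)) \<Longrightarrow> sdp_obj m n B X = sdp_obj m n B Y"
  unfolding sdp_obj_def by (intro sum.cong refl) auto

lemma sdp_obj_add: "sdp_obj m n B (\<lambda>k l. X k l + Y k l) = sdp_obj m n B X + sdp_obj m n B Y"
  unfolding sdp_obj_def by (simp add: sum.distrib algebra_simps)

lemma sdp_obj_cmult: "sdp_obj m n B (\<lambda>k l. c * X k l) = c * sdp_obj m n B X"
  unfolding sdp_obj_def by (simp add: sum_distrib_left algebra_simps)

lemma sdp_obj_sign_mean:
  "sdp_obj m n B (\<lambda>k l. sign_mean d (\<lambda>r. X r k l)) = sign_mean d (\<lambda>r. sdp_obj m n B (X r))"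
  unfolding sdp_obj_def by (simp add: sign_mean_sum sign_mean_cmult)

lemma sdp_feasible_zero: "(\<lambda>_ _. 0) \<in> sdp_feasible N"
  unfolding sdp_feasible_def sym_psd_def by simp

lemma bdd_above_sdp_obj: "bdd_above (sdp_obj m n B ` sdp_feasible (m + n))"
proof (rule bdd_aboveI2)
  fix X assume X: "X \<in> sdp_feasible (m + n)"
  show "sdp_obj m n B X \<le> (\<Sum>i<m. \<Sum>j<n. \<bar>B i j\<bar>)"
    unfolding sdp_obj_def
  proof (intro sum_mono)
    fix i j assume "i \<in> {..<m}" "j \<in> {..<n}"
    then have "2 * \<bar>X i (m + j)\<bar> \<le> X i i + X (m + j) (m + j)" "X i i \<le> 1" "X (m + j) (m + j) \<le> 1"
      using X sym_psd_abs_le[of "m + n" X i "m + j"] unfolding sdp_feasible_def by auto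
    then have "\<bar>X i (m + j)\<bar> \<le> 1"
      by linarith
    then have "\<bar>B i j * X i (m + j)\<bar> \<le> \<bar>B i j\<bar>"
      by (simp add: abs_mult mult_left_le)
    then show "B i j * X i (m + j) \<le> \<bar>B i j\<bar>"
      by simp
  qed
qed

lemma sdp_obj_le_sdp_value: "X \<in> sdp_feasible (m + n) \<Longrightarrow> sdp_obj m n B X \<le> sdp_value m n B"
  unfolding sdp_value_def by (rule cSup_upper) (use bdd_above_sdp_obj in auto)

lemma sdp_value_le:
  assumes "\<And>X. X \<in> sdp_feasible (m + n) \<Longrightarrow> sdp_obj m n B X \<le> c"
  shows "sdp_value m n B \<le> c"
  unfolding sdp_value_def using assms sdp_feasible_zero by (intro cSup_least) auto

lemma bilinear_le_sdp_value:
  assumes "\<And>i. i < m \<Longrightarrow> \<bar>x i\<bar> \<le> 1" "\<And>j. j < n \<Longrightarrow> \<bar>y j\<bar> \<le> 1"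
  shows "(\<Sum>i<m. \<Sum>j<n. B i j * x i * y j) \<le> sdp_value m n B"
proof -
  define v where "v k = (if k < m then x k else y (k - m))" for k
  have "(\<lambda>k l. v k * v l) \<in> sdp_feasible (m + n)"
    unfolding sdp_feasible_def
  proof (intro CollectI conjI allI impI sym_psd_outer)
    fix k assume "k < m + n"
    then have "\<bar>v k\<bar> \<le> 1"
      using assms by (simp add: v_def)
    then show "v k * v k \<le> 1"
      using mult_mono[of "\<bar>v k\<bar>" 1 "\<bar>v k\<bar>" 1] by simp
  qed
  then have "sdp_obj m n B (\<lambda>k l. v k * v l) \<le> sdp_value m n B"
    by (rule sdp_obj_le_sdp_value)
  then show ?thesis
    unfolding sdp_obj_def v_def by (simp add: mult.assoc)
qed

lemma sdp_obj_sign_mean_outer_le: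
  assumes t: "0 < t" and u: "\<And>k. k < m + n \<Longrightarrow> sign_mean d (\<lambda>r. (u r k)^2) \<le> t"
  shows "sdp_obj m n B (\<lambda>k l. sign_mean d (\<lambda>r. u r k * u r l)) \<le> t * sdp_value m n B"
proof -
  define Y where "Y k l = 1 / t * sign_mean d (\<lambda>r. u r k * u r l)" for k l
  have "Y \<in> sdp_feasible (m + n)"
    unfolding sdp_feasible_def Y_def
  proof (intro CollectI conjI allI impI sym_psd_cmult sym_psd_sign_mean sym_psd_outer)
    fix k assume "k < m + n"
    then show "1 / t * sign_mean d (\<lambda>r. u r k * u r k) \<le> 1"
      using u[of k] t by (simp add: power2_eq_square)
  qed (use t in simp)
  then have "sdp_obj m n B Y \<le> sdp_value m n B"
    by (rule sdp_obj_le_sdp_value)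
  moreover have "sdp_obj m n B (\<lambda>k l. sign_mean d (\<lambda>r. u r k * u r l)) = t * sdp_obj m n B Y"
    unfolding Y_def sdp_obj_cmult using t by simp
  ultimately show ?thesis
    using t by simp
qed

text \<open>Scaling the row coordinates of p by s and the column coordinates of q by 1/s keeps the
  off-diagonal block of the outer product of p and q and makes it a block of a covariance matrix.\<close>
lemma sdp_obj_sign_mean_cross_le:
  assumes "0 < s" "0 < t"
    and p: "\<And>k. k < m \<Longrightarrow> s^2 * sign_mean d (\<lambda>r. (p r k)^2) \<le> t"
    and q: "\<And>k. m \<le> k \<Longrightarrow> k < m + n \<Longrightarrow> sign_mean d (\<lambda>r. (q r k)^2) \<le> s^2 * t"
  shows "sdp_obj m n B (\<lambda>k l. sign_mean d (\<lambda>r. p r k * q r l)) \<le> t * sdp_value m n B"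
proof -
  define u where "u r k = (if k < m then s * p r k else 1 / s * q r k)" for r k
  have "sdp_obj m n B (\<lambda>k l. sign_mean d (\<lambda>r. p r k * q r l))
      = sdp_obj m n B (\<lambda>k l. sign_mean d (\<lambda>r. u r k * u r l))"
    by (rule sdp_obj_cong) (use \<open>0 < s\<close> in \<open>simp add: u_def\<close>)
  also have "\<dots> \<le> t * sdp_value m n B"
  proof (rule sdp_obj_sign_mean_outer_le[OF \<open>0 < t\<close>])
    fix k assume k: "k < m + n"
    show "sign_mean d (\<lambda>r. (u r k)^2) \<le> t"
    proof (cases "k < m")
      case True
      then show ?thesis
        using p[OF True] by (simp add: u_def power_mult_distrib sign_mean_cmult)
    next
      case False
      then have "(\<lambda>r. (u r k)^2) = (\<lambda>r. 1 / s^2 * (q r k)^2)"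
        by (simp add: u_def power_divide)
      then have "sign_mean d (\<lambda>r. (u r k)^2) = 1 / s^2 * sign_mean d (\<lambda>r. (q r k)^2)"
        by (simp only: sign_mean_cmult)
      also have "\<dots> \<le> t"
        using q[of k] False k \<open>0 < s\<close> by (simp add: divide_le_eq mult.commute)
      finally show ?thesis .
    qed
  qed
  finally show ?thesis .
qed

lemma sdp_feasible_sign_representation:
  assumes "X \<in> sdp_feasible N"
  obtains z :: "(nat \<Rightarrow> real) \<Rightarrow> nat \<Rightarrow> real" where
    "\<And>i j. i < N \<Longrightarrow> j < N \<Longrightarrow> X i j = sign_mean N (\<lambda>r. z r i * z r j)"
    "\<And>i. i < N \<Longrightarrow> sign_mean N (\<lambda>r. (z r i)^2) \<le> 1"
    "\<And>i. i < N \<Longrightarrow> sign_mean N (\<lambda>r. (z r i)^4) \<le> 3"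
proof -
  have psd: "sym_psd N X" and diag: "\<And>i. i < N \<Longrightarrow> X i i \<le> 1"
    using assms unfolding sdp_feasible_def by auto
  obtain w where w: "\<And>i j. i < N \<Longrightarrow> j < N \<Longrightarrow> X i j = (\<Sum>k<N. w k i * w k j)"
    using sym_psd_gram[OF psd] by blast
  define z where "z r i = rademacher_sum N (\<lambda>k. w k i) r" for r i
  have cov: "X i j = sign_mean N (\<lambda>r. z r i * z r j)" if "i < N" "j < N" for i j
    using w[OF that] sign_mean_rademacher_sum_mult[of N "\<lambda>k. w k i" "\<lambda>k. w k j"]
    unfolding z_def by simp
  show ?thesis
  proof (rule that[OF cov])
    fix i assume i: "i < N"
    show "sign_mean N (\<lambda>r. (z r i)^2) \<le> 1"
      using cov[OF i i] diag[OF i] by (simp add: power2_eq_square)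
    have "sign_mean N (\<lambda>r. (z r i)^4) \<le> 3 * (X i i)^2"
      using sign_mean_rademacher_sum_pow4[of N "\<lambda>k. w k i"] w[OF i i]
      unfolding z_def by (simp add: power2_eq_square)
    moreover have "(X i i)^2 \<le> 1"
      using sym_psd_diag_nonneg[OF psd i] diag[OF i] by (simp add: power_le_one)
    ultimately show "sign_mean N (\<lambda>r. (z r i)^4) \<le> 3"
      by linarith
  qed
qed

definition clip :: "real \<Rightarrow> real \<Rightarrow> real" where
  "clip T z = max (- T) (min T z)"

lemma abs_clip_le: "0 \<le> T \<Longrightarrow> \<bar>clip T z\<bar> \<le> T"
  unfolding clip_def by auto

lemma clip_square_le: "0 \<le> T \<Longrightarrow> (clip T z)^2 \<le> z^2"
  unfolding clip_def by (auto simp: abs_le_square_iff[symmetric])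

lemma clip_tail_le:
  assumes "0 < T"
  shows "(z - clip T z)^2 \<le> z^4 / T^2"
proof (cases "\<bar>z\<bar> \<le> T")
  case True
  then show ?thesis
    unfolding clip_def by auto
next
  case False
  then have "\<bar>z - clip T z\<bar> \<le> \<bar>z\<bar>"
    using assms unfolding clip_def max_def min_def by auto
  then have "(z - clip T z)^2 \<le> z^2"
    by (simp add: abs_le_square_iff)
  also have "\<dots> = z^2 * T^2 / T^2"
    using assms by simp
  also have "\<dots> \<le> z^2 * z^2 / T^2"
  proof -
    have "T^2 \<le> z^2"
      using abs_le_square_iff[of T z] False assms by simp
    then show ?thesis
      by (intro divide_right_mono mult_left_mono) auto
  qed
  finally show ?thesis
    by (simp add: power4_eq_xxxx power2_eq_square)
qed

lemma sign_mean_clip_square_le: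
  "0 \<le> T \<Longrightarrow> sign_mean d (\<lambda>r. (clip T (f r))^2) \<le> sign_mean d (\<lambda>r. (f r)^2)"
  by (intro sign_mean_mono clip_square_le)

lemma sign_mean_clip_tail_le:
  assumes "0 < T"
  shows "sign_mean d (\<lambda>r. (f r - clip T (f r))^2) \<le> sign_mean d (\<lambda>r. (f r)^4) / T^2"
proof -
  have "sign_mean d (\<lambda>r. (f r - clip T (f r))^2) \<le> sign_mean d (\<lambda>r. 1 / T^2 * (f r)^4)"
    by (rule sign_mean_mono) (use clip_tail_le[OF assms] in simp)
  also have "\<dots> = sign_mean d (\<lambda>r. (f r)^4) / T^2"
    by (simp only: sign_mean_cmult) simp
  finally show ?thesis .
qed

lemma sdp_obj_sign_mean_bounded_outer_le:
  assumes bilinear: "\<And>x y. (\<And>i. i < m \<Longrightarrow> \<bar>x i\<bar> \<le> 1) \<Longrightarrow> (\<And>j. j < n \<Longrightarrow> \<bar>y j\<bar> \<le> 1) \<Longrightarrow>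
      (\<Sum>i<m. \<Sum>j<n. B i j * x i * y j) \<le> C"
    and "0 < T" and bounded: "\<And>r k. \<bar>a r k\<bar> \<le> T"
  shows "sdp_obj m n B (\<lambda>k l. sign_mean d (\<lambda>r. a r k * a r l)) \<le> T^2 * C"
proof -
  have "sdp_obj m n B (\<lambda>k l. a r k * a r l)
      = T^2 * (\<Sum>i<m. \<Sum>j<n. B i j * (a r i / T) * (a r (m + j) / T))" for r
    unfolding sdp_obj_def using \<open>0 < T\<close> by (simp add: sum_distrib_left power2_eq_square algebra_simps)
  also have "\<dots> r \<le> T^2 * C" for r
    using bounded \<open>0 < T\<close> by (intro mult_left_mono bilinear) auto
  finally show ?thesis
    unfolding sdp_obj_sign_mean using sign_mean_mono[of _ "\<lambda>_. T^2 * C" d]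
    by (simp add: sign_mean_const)
qed

lemma sdp_obj_le_bilinear_bound:
  assumes bilinear: "\<And>x y. (\<And>i. i < m \<Longrightarrow> \<bar>x i\<bar> \<le> 1) \<Longrightarrow> (\<And>j. j < n \<Longrightarrow> \<bar>y j\<bar> \<le> 1) \<Longrightarrow>
      (\<Sum>i<m. \<Sum>j<n. B i j * x i * y j) \<le> C"
    and X: "X \<in> sdp_feasible (m + n)"
  shows "sdp_obj m n B X \<le> 64 * C + sdp_value m n B / 2"
proof -
  define N where "N = m + n"
  obtain z where cov: "\<And>i j. i < N \<Longrightarrow> j < N \<Longrightarrow> X i j = sign_mean N (\<lambda>r. z r i * z r j)"
    and z2: "\<And>i. i < N \<Longrightarrow> sign_mean N (\<lambda>r. (z r i)^2) \<le> 1"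
    and z4: "\<And>i. i < N \<Longrightarrow> sign_mean N (\<lambda>r. (z r i)^4) \<le> 3"
    using sdp_feasible_sign_representation[OF X[folded N_def]] by blast
  define a where "a r k = clip 8 (z r k)" for r k
  define b where "b r k = z r k - a r k" for r k
  have a2: "sign_mean N (\<lambda>r. (a r k)^2) \<le> 1" if "k < N" for k
    using sign_mean_clip_square_le[of 8 N "\<lambda>r. z r k"] z2[OF that] unfolding a_def by simp
  have b2: "sign_mean N (\<lambda>r. (b r k)^2) \<le> 3 / 64" if "k < N" for k
    using sign_mean_clip_tail_le[of 8 N "\<lambda>r. z r k"] z4[OF that] unfolding a_def b_def by simp
  have "z r k * z r l = a r k * a r l + a r k * b r l + b r k * z r l" for r k l
    by (simp add: b_def algebra_simps)
  then have "sdp_obj m n B X = sdp_obj m n B (\<lambda>k l. sign_mean N (\<lambda>r. a r k * a r l))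
      + sdp_obj m n B (\<lambda>k l. sign_mean N (\<lambda>r. a r k * b r l))
      + sdp_obj m n B (\<lambda>k l. sign_mean N (\<lambda>r. b r k * z r l))"
    unfolding sdp_obj_add[symmetric] sign_mean_add[symmetric]
    by (intro sdp_obj_cong) (simp add: cov N_def)
  also have "sdp_obj m n B (\<lambda>k l. sign_mean N (\<lambda>r. a r k * a r l)) \<le> 8^2 * C"
    using bilinear by (rule sdp_obj_sign_mean_bounded_outer_le) (simp_all add: a_def abs_clip_le)
  also have "sdp_obj m n B (\<lambda>k l. sign_mean N (\<lambda>r. a r k * b r l)) \<le> 1 / 4 * sdp_value m n B"
  proof (rule sdp_obj_sign_mean_cross_le[where s = "1 / 2"])
    fix k assume "k < m"
    then show "(1 / 2)^2 * sign_mean N (\<lambda>r. (a r k)^2) \<le> 1 / 4"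
      using a2[of k] by (simp add: N_def power_divide)
  next
    fix k assume "k < m + n"
    then show "sign_mean N (\<lambda>r. (b r k)^2) \<le> (1 / 2)^2 * (1 / 4)"
      using b2[of k] by (simp add: N_def power_divide)
  qed simp_all
  also have "sdp_obj m n B (\<lambda>k l. sign_mean N (\<lambda>r. b r k * z r l)) \<le> 1 / 4 * sdp_value m n B"
  proof (rule sdp_obj_sign_mean_cross_le[where s = 2])
    fix k assume "k < m"
    then show "2^2 * sign_mean N (\<lambda>r. (b r k)^2) \<le> 1 / 4"
      using b2[of k] by (simp add: N_def)
  next
    fix k assume "k < m + n"
    then show "sign_mean N (\<lambda>r. (z r k)^2) \<le> 2^2 * (1 / 4)"
      using z2[of k] by (simp add: N_def)
  qed simp_all
  finally show ?thesis
    by simp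
qed

lemma sdp_value_le_bilinear_bound:
  assumes "\<And>x y. (\<And>i. i < m \<Longrightarrow> \<bar>x i\<bar> \<le> 1) \<Longrightarrow> (\<And>j. j < n \<Longrightarrow> \<bar>y j\<bar> \<le> 1) \<Longrightarrow>
      (\<Sum>i<m. \<Sum>j<n. B i j * x i * y j) \<le> C"
  shows "sdp_value m n B \<le> 128 * C"
proof -
  have "sdp_value m n B \<le> 64 * C + sdp_value m n B / 2"
    by (rule sdp_value_le) (rule sdp_obj_le_bilinear_bound[OF assms])
  then show ?thesis
    by simp
qed

section \<open>Rectangle sums and discrepancy\<close>

definition rect_sum :: "(nat \<Rightarrow> nat \<Rightarrow> real) \<Rightarrow> nat set \<Rightarrow> nat set \<Rightarrow> real" where
  "rect_sum B S T = (\<Sum>i\<in>S. \<Sum>j\<in>T. B i j)"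

lemma rect_sum_complement_split:
  assumes "S \<subseteq> I" "T \<subseteq> J" "finite I" "finite J"
  shows "rect_sum B I J
    = rect_sum B S T + rect_sum B (I - S) T + rect_sum B S (J - T) + rect_sum B (I - S) (J - T)"
proof -
  have rows: "rect_sum B I U = rect_sum B S U + rect_sum B (I - S) U" for U
    unfolding rect_sum_def using sum.subset_diff[OF assms(1,3)] by (simp add: add.commute)
  have cols: "rect_sum B U J = rect_sum B U T + rect_sum B U (J - T)" for U
    unfolding rect_sum_def sum.subset_diff[OF assms(2,4)] by (simp add: sum.distrib add.commute)
  show ?thesis
    using rows[of J] cols[of S] cols[of "I - S"] by simp
qed

lemma rect_sum_eq_bilinear:
  assumes "S \<subseteq> {..<m}" "T \<subseteq> {..<n}"
  shows "rect_sum B S T = (\<Sum>i<m. \<Sum>j<n. B i j * of_bool (i \<in> S) * of_bool (j \<in> T))"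
proof -
  have "(\<Sum>i<m. \<Sum>j<n. B i j * of_bool (i \<in> S) * of_bool (j \<in> T))
      = (\<Sum>i<m. (\<Sum>j\<in>T. B i j) * of_bool (i \<in> S))"
    using assms(2) by (simp add: sum_distrib_right[symmetric] Int_absorb1)
  also have "\<dots> = rect_sum B S T"
    using assms(1) by (simp add: rect_sum_def Int_absorb1)
  finally show ?thesis ..
qed

lemma sum_mult_le_sign_split:
  fixes x c :: "'a \<Rightarrow> real"
  assumes "finite I" "\<And>i. i \<in> I \<Longrightarrow> \<bar>x i\<bar> \<le> 1"
  shows "(\<Sum>i\<in>I. x i * c i) \<le> (\<Sum>i\<in>{i\<in>I. 0 \<le> c i}. c i) - (\<Sum>i\<in>{i\<in>I. c i < 0}. c i)"
proof -
  have "(\<Sum>i\<in>I. x i * c i) \<le> (\<Sum>i\<in>I. \<bar>c i\<bar>)"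
  proof (rule sum_mono)
    fix i assume "i \<in> I"
    then have "\<bar>x i * c i\<bar> \<le> \<bar>c i\<bar>"
      using assms(2) by (simp add: abs_mult mult_left_le_one_le)
    then show "x i * c i \<le> \<bar>c i\<bar>"
      by simp
  qed
  also have "\<dots> = (\<Sum>i\<in>I. if 0 \<le> c i then c i else 0) - (\<Sum>i\<in>I. if c i < 0 then c i else 0)"
    unfolding sum_subtractf[symmetric] by (rule sum.cong) auto
  also have "\<dots> = (\<Sum>i\<in>{i\<in>I. 0 \<le> c i}. c i) - (\<Sum>i\<in>{i\<in>I. c i < 0}. c i)"
    using assms(1) by (simp add: sum.inter_filter)
  finally show ?thesis .
qed

text \<open>Optimizing x for fixed y, and then y, turns both into sign patterns of row and
  column sums, i.e. into differences of rectangle sums.\<close>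
lemma bilinear_le_rect_sums:
  assumes P: "\<And>S T. S \<subseteq> {..<m} \<Longrightarrow> T \<subseteq> {..<n} \<Longrightarrow> rect_sum B S T \<le> P"
    and Q: "\<And>S T. S \<subseteq> {..<m} \<Longrightarrow> T \<subseteq> {..<n} \<Longrightarrow> - rect_sum B S T \<le> Q"
    and x: "\<And>i. i < m \<Longrightarrow> \<bar>x i\<bar> \<le> 1" and y: "\<And>j. j < n \<Longrightarrow> \<bar>y j\<bar> \<le> 1"
  shows "(\<Sum>i<m. \<Sum>j<n. B i j * x i * y j) \<le> 2 * P + 2 * Q"
proof -
  define c where "c i = (\<Sum>j<n. B i j * y j)" for i
  define S\<^sub>1 where "S\<^sub>1 = {i\<in>{..<m}. 0 \<le> c i}"
  define S\<^sub>2 where "S\<^sub>2 = {i\<in>{..<m}. c i < 0}"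
  define d where "d j = (\<Sum>i\<in>S\<^sub>1. B i j) - (\<Sum>i\<in>S\<^sub>2. B i j)" for j
  define T\<^sub>1 where "T\<^sub>1 = {j\<in>{..<n}. 0 \<le> d j}"
  define T\<^sub>2 where "T\<^sub>2 = {j\<in>{..<n}. d j < 0}"
  have "(\<Sum>i<m. \<Sum>j<n. B i j * x i * y j) = (\<Sum>i<m. x i * c i)"
    unfolding c_def by (simp add: sum_distrib_left algebra_simps)
  also have "\<dots> \<le> (\<Sum>i\<in>S\<^sub>1. c i) - (\<Sum>i\<in>S\<^sub>2. c i)"
    unfolding S\<^sub>1_def S\<^sub>2_def by (rule sum_mult_le_sign_split) (use x in auto)
  also have "\<dots> = (\<Sum>j<n. y j * d j)"
    unfolding c_def d_def
    by (simp add: sum_distrib_left sum_subtractf sum.swap[of _ S\<^sub>1] sum.swap[of _ S\<^sub>2] algebra_simps)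
  also have "\<dots> \<le> (\<Sum>j\<in>T\<^sub>1. d j) - (\<Sum>j\<in>T\<^sub>2. d j)"
    unfolding T\<^sub>1_def T\<^sub>2_def by (rule sum_mult_le_sign_split) (use y in auto)
  also have "\<dots> = rect_sum B S\<^sub>1 T\<^sub>1 - rect_sum B S\<^sub>2 T\<^sub>1 - rect_sum B S\<^sub>1 T\<^sub>2 + rect_sum B S\<^sub>2 T\<^sub>2"
    unfolding d_def rect_sum_def by (simp add: sum_subtractf sum.swap[of _ T\<^sub>1] sum.swap[of _ T\<^sub>2])
  also have "\<dots> \<le> 2 * P + 2 * Q"
  proof -
    have "S\<^sub>1 \<subseteq> {..<m}" "S\<^sub>2 \<subseteq> {..<m}" "T\<^sub>1 \<subseteq> {..<n}" "T\<^sub>2 \<subseteq> {..<n}"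
      unfolding S\<^sub>1_def S\<^sub>2_def T\<^sub>1_def T\<^sub>2_def by auto
    then show ?thesis
      using P[of S\<^sub>1 T\<^sub>1] P[of S\<^sub>2 T\<^sub>2] Q[of S\<^sub>2 T\<^sub>1] Q[of S\<^sub>1 T\<^sub>2] by linarith
  qed
  finally show ?thesis .
qed

lemma abs_rect_sum_le_sdp_value:
  assumes "S \<subseteq> {..<m}" "T \<subseteq> {..<n}"
  shows "\<bar>rect_sum B S T\<bar> \<le> sdp_value m n B"
proof -
  have "(\<Sum>i<m. \<Sum>j<n. B i j * (\<sigma> * of_bool (i \<in> S)) * of_bool (j \<in> T)) \<le> sdp_value m n B"
    if "\<bar>\<sigma>\<bar> = 1" for \<sigma> :: real
    by (rule bilinear_le_sdp_value) (simp_all add: that)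
  from this[of 1] this[of "-1"] show ?thesis
    unfolding rect_sum_eq_bilinear[OF assms]
    by (simp add: abs_le_iff sum_negf algebra_simps)
qed

definition centered :: "nat \<Rightarrow> nat \<Rightarrow> (nat \<Rightarrow> nat \<Rightarrow> real) \<Rightarrow> nat \<Rightarrow> nat \<Rightarrow> real" where
  "centered m n M i j = M i j - density m n M"

lemma disc_rect_eq_rect_sum: "disc_rect m n M S T = rect_sum (centered m n M) S T"
  unfolding disc_rect_def rect_sum_def centered_def
  by (simp add: sum_subtractf sum_distrib_left algebra_simps)

lemma rect_sum_centered_total:
  "m \<ge> 1 \<Longrightarrow> n \<ge> 1 \<Longrightarrow> rect_sum (centered m n M) {..<m} {..<n} = 0"
  by (simp add: disc_rect_eq_rect_sum[symmetric] disc_rect_def density_def)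

lemma disc_plus_eq_Max:
  "disc_plus m n M = Max ((\<lambda>(S, T). rect_sum (centered m n M) S T) ` (Pow {..<m} \<times> Pow {..<n}))"
  unfolding disc_plus_def disc_rect_eq_rect_sum by (rule arg_cong[where f = Max]) auto

lemma disc_minus_eq_Max:
  "disc_minus m n M = Max ((\<lambda>(S, T). - rect_sum (centered m n M) S T) ` (Pow {..<m} \<times> Pow {..<n}))"
  unfolding disc_minus_def disc_rect_eq_rect_sum by (rule arg_cong[where f = Max]) auto

lemma rect_sum_le_disc_plus:
  "S \<subseteq> {..<m} \<Longrightarrow> T \<subseteq> {..<n} \<Longrightarrow> rect_sum (centered m n M) S T \<le> disc_plus m n M"
  unfolding disc_plus_eq_Max by (rule Max_ge) auto

lemma neg_rect_sum_le_disc_minus: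
  "S \<subseteq> {..<m} \<Longrightarrow> T \<subseteq> {..<n} \<Longrightarrow> - rect_sum (centered m n M) S T \<le> disc_minus m n M"
  unfolding disc_minus_eq_Max by (rule Max_ge) auto

lemma disc_plus_attained:
  obtains S T where "S \<subseteq> {..<m}" "T \<subseteq> {..<n}" "disc_plus m n M = rect_sum (centered m n M) S T"
proof -
  have "disc_plus m n M \<in> (\<lambda>(S, T). rect_sum (centered m n M) S T) ` (Pow {..<m} \<times> Pow {..<n})"
    unfolding disc_plus_eq_Max by (rule Max_in) auto
  then show ?thesis
    using that by auto
qed

lemma disc_minus_attained:
  obtains S T where "S \<subseteq> {..<m}" "T \<subseteq> {..<n}" "disc_minus m n M = - rect_sum (centered m n M) S T"
proof -
  have "disc_minus m n M \<in> (\<lambda>(S, T). - rect_sum (centered m n M) S T) ` (Pow {..<m} \<times> Pow {..<n})"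
    unfolding disc_minus_eq_Max by (rule Max_in) auto
  then show ?thesis
    using that by auto
qed

text \<open>The four rectangles cut out by S, T and their complements sum to zero.\<close>
lemma disc_minus_le_disc_plus:
  assumes "m \<ge> 1" "n \<ge> 1"
  shows "disc_minus m n M \<le> 3 * disc_plus m n M"
proof -
  obtain S T where ST: "S \<subseteq> {..<m}" "T \<subseteq> {..<n}"
    and disc: "disc_minus m n M = - rect_sum (centered m n M) S T"
    by (rule disc_minus_attained)
  show ?thesis
    using rect_sum_complement_split[OF ST finite_lessThan finite_lessThan, of "centered m n M"]
      rect_sum_centered_total[OF assms, of M] disc
      rect_sum_le_disc_plus[of "{..<m} - S" m T n M]
      rect_sum_le_disc_plus[of S m "{..<n} - T" n M]
      rect_sum_le_disc_plus[of "{..<m} - S" m "{..<n} - T" n M] ST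
    by auto
qed

lemma disc_plus_le_disc_minus:
  assumes "m \<ge> 1" "n \<ge> 1"
  shows "disc_plus m n M \<le> 3 * disc_minus m n M"
proof -
  obtain S T where ST: "S \<subseteq> {..<m}" "T \<subseteq> {..<n}"
    and disc: "disc_plus m n M = rect_sum (centered m n M) S T"
    by (rule disc_plus_attained)
  show ?thesis
    using rect_sum_complement_split[OF ST finite_lessThan finite_lessThan, of "centered m n M"]
      rect_sum_centered_total[OF assms, of M] disc
      neg_rect_sum_le_disc_minus[of "{..<m} - S" m T n M]
      neg_rect_sum_le_disc_minus[of S m "{..<n} - T" n M]
      neg_rect_sum_le_disc_minus[of "{..<m} - S" m "{..<n} - T" n M] ST
    by auto
qed

lemma sum_lessThan_add_split:
  "(\<Sum>i<m + n. f i) = (\<Sum>i<m. f i) + (\<Sum>j<n. f (m + j))" for n :: nat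
  by (induction n) (simp_all add: add.assoc)

lemma disc_mat_eq_sdp_obj:
  assumes sym: "\<And>i j. i < m + n \<Longrightarrow> j < m + n \<Longrightarrow> X i j = X j i"
  shows "disc_mat m n M X = 2 * sdp_obj m n (centered m n M) X"
proof -
  have "disc_mat m n M X = (\<Sum>i<m + n. \<Sum>j<m + n.
      X i j * (symmetrization m n M i j - density m n M * bip_L m n i j))"
    unfolding disc_mat_def frob_def by (simp add: sum_subtractf sum_distrib_left algebra_simps)
  also have "\<dots> = (\<Sum>i<m. \<Sum>j<n. X i (m + j) * centered m n M i j)
      + (\<Sum>j<n. \<Sum>i<m. X (m + j) i * centered m n M i j)"
    by (simp add: sum_lessThan_add_split sum.distrib symmetrization_def bip_L_def centered_def)
  also have "\<dots> = 2 * sdp_obj m n (centered m n M) X"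
    unfolding sum.swap[of _ "{..<n}"] sdp_obj_def using sym
    by (simp add: sum_distrib_left algebra_simps)
  finally show ?thesis .
qed

lemma pdisc_eq_sdp_value: "pdisc m n M = 2 * sdp_value m n (centered m n M)"
proof -
  let ?F = "sdp_feasible (m + n)" and ?B = "centered m n M"
  have sym: "X i j = X j i" if "X \<in> ?F" "i < m + n" "j < m + n" for X i j
    using that unfolding sdp_feasible_def sym_psd_def by blast
  have pdisc: "pdisc m n M = Sup ((\<lambda>X. 2 * sdp_obj m n ?B X) ` ?F)"
  proof -
    have "{disc_mat m n M X | X. sym_psd (m + n) X \<and> (\<forall>i<m + n. X i i \<le> 1)} = disc_mat m n M ` ?F"
      unfolding sdp_feasible_def by blast
    also have "\<dots> = (\<lambda>X. 2 * sdp_obj m n ?B X) ` ?F"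
      using disc_mat_eq_sdp_obj sym by (intro image_cong) blast+
    finally show ?thesis
      unfolding pdisc_def by simp
  qed
  have bdd: "bdd_above ((\<lambda>X. 2 * sdp_obj m n ?B X) ` ?F)"
    using sdp_obj_le_sdp_value by (intro bdd_aboveI2[where M = "2 * sdp_value m n ?B"]) auto
  show ?thesis
  proof (rule antisym)
    show "pdisc m n M \<le> 2 * sdp_value m n ?B"
      unfolding pdisc using sdp_feasible_zero[of "m + n"]
      by (intro cSup_least) (auto intro: sdp_obj_le_sdp_value)
    have "sdp_value m n ?B \<le> pdisc m n M / 2"
      unfolding pdisc using bdd by (intro sdp_value_le) (simp add: cSup_upper)
    then show "2 * sdp_value m n ?B \<le> pdisc m n M"
      by simp
  qed
qed

lemma disc_plus_le_sdp_value: "disc_plus m n M \<le> sdp_value m n (centered m n M)"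
  by (metis disc_plus_attained abs_rect_sum_le_sdp_value abs_ge_self order_trans)

lemma disc_minus_le_sdp_value: "disc_minus m n M \<le> sdp_value m n (centered m n M)"
  by (metis disc_minus_attained abs_rect_sum_le_sdp_value abs_ge_minus_self order_trans)

lemma sdp_value_le_disc:
  "sdp_value m n (centered m n M) \<le> 256 * (disc_plus m n M + disc_minus m n M)"
proof -
  have "sdp_value m n (centered m n M) \<le> 128 * (2 * disc_plus m n M + 2 * disc_minus m n M)"
    by (intro sdp_value_le_bilinear_bound bilinear_le_rect_sums rect_sum_le_disc_plus
        neg_rect_sum_le_disc_minus)
  then show ?thesis
    by simp
qed

lemma pdisc_disc_bounds:
  assumes "m \<ge> 1" "n \<ge> 1"
  shows "2 * disc_plus m n M \<le> pdisc m n M \<and> pdisc m n M \<le> 2048 * disc_plus m n M \<and>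
    2 * disc_minus m n M \<le> pdisc m n M \<and> pdisc m n M \<le> 2048 * disc_minus m n M"
proof -
  let ?V = "sdp_value m n (centered m n M)"
  have pdisc: "pdisc m n M = 2 * ?V"
    by (rule pdisc_eq_sdp_value)
  have lower: "disc_plus m n M \<le> ?V" "disc_minus m n M \<le> ?V"
    by (rule disc_plus_le_sdp_value disc_minus_le_sdp_value)+
  have upper: "?V \<le> 256 * disc_plus m n M + 256 * disc_minus m n M"
    using sdp_value_le_disc[of m n M] by simp
  have comparable: "disc_minus m n M \<le> 3 * disc_plus m n M" "disc_plus m n M \<le> 3 * disc_minus m n M"
    using disc_minus_le_disc_plus[OF assms] disc_plus_le_disc_minus[OF assms] by auto
  show ?thesis
    using pdisc lower upper comparable by linarith
qed

theorem claim2p6: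
  shows "\<exists>c1 c2 :: real. c1 > 0 \<and> c2 > 0 \<and>
    (\<forall>(m::nat) (n::nat) (M :: nat \<Rightarrow> nat \<Rightarrow> real).
       m \<ge> 1 \<longrightarrow> n \<ge> 1 \<longrightarrow> (\<forall>i<m. \<forall>j<n. M i j \<in> {0, 1}) \<longrightarrow>
       c1 * disc_plus m n M \<le> pdisc m n M \<and> pdisc m n M \<le> c2 * disc_plus m n M \<and>
       c1 * disc_minus m n M \<le> pdisc m n M \<and> pdisc m n M \<le> c2 * disc_minus m n M)"
  using pdisc_disc_bounds by (intro exI[of _ 2] exI[of _ 2048]) simp

end
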